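(* Let $\mathbb T=\mathbb R/2\pi\mathbb Z$ with normalized Lebesgue measure $dx$, $\rho$ a smooth strictly positive probability density, $(t,x)\mapsto\phi_t(x)$ smooth on $[0,1]\times\mathbb T$, $X_t$ the flow of $\frac{dX_t}{dt}=\partial_x\phi_t(X_t)$, $X_0=\mathrm{id}$, and $\rho_t$ the density of $(X_t)_\#(\rho\,dx)$; set $\hat\rho_t=1/\big((\int_{\mathbb T}\frac{dx}{\rho_t})\rho_t\big)$. Let $g:[0,1]\times\mathbb T\to\mathbb R$, $g_t\in C^2(\mathbb T)$, $C^1$ in $t$, with $\int_{\mathbb T}g_t\,dx=0$, be a solution of $$\frac{dg_t}{dt}=-\partial_xg_t\,\partial_x\phi_t+\Big(\int_{\mathbb T}\partial_xg_t\,\partial_x\phi_t\,dx\Big)\hat\rho_t.$$ Then $\int_{\mathbb T}|g_t|^2\rho_t\,dx=\int_{\mathbb T}|g_0|^2\rho\,dx$ for all $t\in[0,1]$. *)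

theory Defs
  imports "HOL-Analysis.Analysis"
begin

text \<open>The circle T = R/2piZ is modelled by 2pi-periodic functions on R.
  Normalized Lebesgue measure on T: uniform (probability) measure on [0,2pi).\<close>

definition Tmeas :: "real measure" where
  "Tmeas = uniform_measure lborel {0..<2*pi}"

definition Tint :: "(real \<Rightarrow> real) \<Rightarrow> real" where
  "Tint f = integral\<^sup>L Tmeas f"

definition tmod :: "real \<Rightarrow> real" where
  "tmod x = x - 2*pi * of_int \<lfloor>x / (2*pi)\<rfloor>"

definition periodic2pi :: "(real \<Rightarrow> real) \<Rightarrow> bool" where
  "periodic2pi f \<longleftrightarrow> (\<forall>x. f (x + 2*pi) = f x)"

definition Cn :: "nat \<Rightarrow> (real \<Rightarrow> real) \<Rightarrow> bool" where
  "Cn k f \<longleftrightarrow> (\<forall>j<k. \<forall>x. ((deriv ^^ j) f) differentiable (at x))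
              \<and> continuous_on UNIV ((deriv ^^ k) f)"

definition smooth1 :: "(real \<Rightarrow> real) \<Rightarrow> bool" where
  "smooth1 f \<longleftrightarrow> (\<forall>k. Cn k f)"

fun Ck2 :: "nat \<Rightarrow> (real \<times> real) set \<Rightarrow> (real \<times> real \<Rightarrow> real) \<Rightarrow> bool" where
  "Ck2 0 S f = continuous_on S f"
| "Ck2 (Suc k) S f = (\<exists>D1 D2.
      (\<forall>p\<in>S. (f has_derivative (\<lambda>h. D1 p * fst h + D2 p * snd h)) (at p within S))
      \<and> Ck2 k S D1 \<and> Ck2 k S D2)"

definition smooth2 :: "(real \<times> real) set \<Rightarrow> (real \<times> real \<Rightarrow> real) \<Rightarrow> bool" where
  "smooth2 S f \<longleftrightarrow> (\<forall>k. Ck2 k S f)"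

end

theory Submission
  imports Defs
begin

text \<open>
  Put \<open>u\<^sub>t = g\<^sub>t \<circ> X\<^sub>t\<close>. Since \<open>X\<^sub>t\<close> moves with velocity \<open>\<partial>\<^sub>x \<phi>\<^sub>t\<close>, the transport term of the
  equation cancels along the flow and \<open>\<partial>\<^sub>t u\<^sub>t = a(t) / \<rho>\<^sub>t(X\<^sub>t)\<close>, where
  \<open>a(t) = (\<integral> \<partial>\<^sub>x g\<^sub>t \<partial>\<^sub>x \<phi>\<^sub>t) / (\<integral> 1/\<rho>\<^sub>t)\<close>. As \<open>\<rho>\<^sub>t dx\<close> is the image of \<open>\<rho> dx\<close> under \<open>X\<^sub>t\<close>, the weighted
  norm is \<open>\<integral> u\<^sub>t\<^sup>2 \<rho>\<close>, and its derivative \<open>2 a(t) \<integral> (g\<^sub>t/\<rho>\<^sub>t)(X\<^sub>t) \<rho> = 2 a(t) \<integral> g\<^sub>t\<close> vanishes.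

  Differentiating under the integral needs \<open>\<rho>\<^sub>t\<close> bounded above and away from zero uniformly in
  \<open>t\<close>. By Gronwall each \<open>X\<^sub>t\<close> lifts a bi-Lipschitz circle map with constant \<open>e\<^sup>L\<close>, and testing
  the push-forward identity against narrow bumps gives \<open>min \<rho> / e\<^sup>L \<le> \<rho>\<^sub>t \<le> e\<^sup>L max \<rho>\<close>.
\<close>

section \<open>Integration over the circle\<close>

lemma sets_Tmeas [simp, measurable_cong]: "sets Tmeas = sets borel"
  by (simp add: Tmeas_def)

lemma space_Tmeas [simp]: "space Tmeas = UNIV"
  by (simp add: Tmeas_def)

interpretation Tmeas: finite_measure Tmeas
proof
  have "emeasure Tmeas {0..<2*pi} = 1"
    unfolding Tmeas_def by (rule emeasure_uniform_measure_1) auto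
  moreover have "emeasure Tmeas (UNIV - {0..<2*pi}) = 0"
    unfolding Tmeas_def by simp
  ultimately show "emeasure Tmeas (space Tmeas) \<noteq> \<infinity>"
    using emeasure_Un[of "{0..<2*pi}" Tmeas "UNIV - {0..<2*pi}"] by simp
qed

lemma Tmeas_eq_density: "Tmeas = density lborel (\<lambda>x. ennreal (indicator {0..<2*pi} x / (2*pi)))"
proof -
  have "1 / ennreal (2*pi) = ennreal (1 / (2*pi))"
    using divide_ennreal[of 1 "2*pi"] by simp
  then show ?thesis
    unfolding Tmeas_def uniform_measure_def by (intro density_cong) (auto simp: indicator_def)
qed

lemma borel_measurable_Tmeas_continuous:
  "continuous_on UNIV f \<Longrightarrow> (f :: real \<Rightarrow> real) \<in> borel_measurable Tmeas"
  using borel_measurable_continuous_onI measurable_cong_sets by (metis sets_Tmeas)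

lemma integrable_Tmeas_continuous_bounded:
  assumes "continuous_on UNIV f" and "\<And>x. \<bar>f x\<bar> \<le> B"
  shows "integrable Tmeas (f :: real \<Rightarrow> real)"
  using assms by (intro Tmeas.integrable_const_bound[where B=B]) (auto intro: borel_measurable_Tmeas_continuous)

lemma Tint_eq_integral:
  assumes "continuous_on UNIV f"
  shows "Tint f = integral {0..2*pi} f / (2*pi)"
proof -
  have "f \<in> borel_measurable lborel"
    using assms by (simp add: borel_measurable_continuous_onI)
  then have "Tint f = integral\<^sup>L lborel (\<lambda>x. indicator {0..<2*pi} x / (2*pi) * f x)"
    unfolding Tint_def Tmeas_eq_density by (subst integral_density) auto
  also have "\<dots> = (LINT x:{0..<2*pi}|lborel. f x) / (2*pi)"
    by (simp add: set_lebesgue_integral_def indicator_def)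
  also have "(LINT x:{0..<2*pi}|lborel. f x) = integral {0..<2*pi} f"
  proof (rule set_borel_integral_eq_integral)
    have "set_integrable lborel {0..2*pi} f"
      by (rule borel_integrable_atLeastAtMost') (rule continuous_on_subset[OF assms], auto)
    then show "set_integrable lborel {0..<2*pi} f"
      by (rule set_integrable_subset) auto
  qed
  also have "integral {0..<2*pi} f = integral {0..2*pi} f"
    by (rule integral_spike_set) (auto intro: negligible_subset[OF negligible_sing[of "2*pi"]])
  finally show ?thesis .
qed

lemma periodic2pi_int:
  assumes "periodic2pi f"
  shows "f (x + 2*pi * of_int k) = f x"
proof (induction k arbitrary: x rule: int_induct[where k=0])
  case (step1 i)
  have "f (x + 2*pi * of_int (i + 1)) = f ((x + 2*pi * of_int i) + 2*pi)"
    by (simp add: algebra_simps)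
  with assms step1 show ?case by (simp add: periodic2pi_def)
next
  case (step2 i)
  have "f (x + 2*pi * of_int i) = f ((x + 2*pi * of_int (i - 1)) + 2*pi)"
    by (simp add: algebra_simps)
  with assms step2 show ?case by (simp add: periodic2pi_def)
qed simp

lemma tmod_in_period: "tmod x \<in> {0..<2*pi}"
proof -
  define y where "y = x / (2*pi)"
  have "of_int \<lfloor>y\<rfloor> \<le> y" "y < of_int \<lfloor>y\<rfloor> + 1"
    by linarith+
  then have "2*pi * of_int \<lfloor>y\<rfloor> \<le> 2*pi*y" "2*pi*y < 2*pi * (of_int \<lfloor>y\<rfloor> + 1)"
    by (intro mult_left_mono mult_strict_left_mono; simp)+
  moreover have "x = 2*pi*y" by (simp add: y_def)
  ultimately show ?thesis unfolding tmod_def y_def[symmetric] by (auto simp: algebra_simps)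
qed

lemma periodic2pi_tmod: "periodic2pi f \<Longrightarrow> f (tmod x) = f x"
  unfolding tmod_def using periodic2pi_int[of f "x - 2*pi * of_int \<lfloor>x / (2*pi)\<rfloor>" "\<lfloor>x / (2*pi)\<rfloor>"]
  by simp

lemma integrable_on_interval_continuous:
  "continuous_on UNIV f \<Longrightarrow> (f :: real \<Rightarrow> real) integrable_on {a..b}"
  by (rule integrable_continuous_interval, erule continuous_on_subset) auto

lemma integral_period_shift:
  fixes f :: "real \<Rightarrow> real"
  assumes cont: "continuous_on UNIV f" and per: "periodic2pi f"
  shows "integral {a..a+2*pi} f = integral {0..2*pi} f"
proof -
  define b where "b = tmod a"
  have b: "0 \<le> b" "b < 2*pi" using tmod_in_period[of a] by (auto simp: b_def)
  define n where "n = \<lfloor>a / (2*pi)\<rfloor>"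
  have a: "a = b + 2*pi * of_int n" by (simp add: b_def tmod_def n_def)
  have "integral {a..a+2*pi} f = integral {b..b+2*pi} (\<lambda>x. f (x + 2*pi * of_int n))"
    using integral_shift_real_ivl[of "b + 2*pi * of_int n" "2*pi * of_int n" "b+2*pi + 2*pi * of_int n" f] a
    by (simp add: algebra_simps)
  also have "\<dots> = integral {b..b+2*pi} f"
    using periodic2pi_int[OF per] by simp
  also have "\<dots> = integral {b..2*pi} f + integral {2*pi..b+2*pi} f"
    using b integrable_on_interval_continuous[OF cont]
    by (intro Henstock_Kurzweil_Integration.integral_combine[symmetric]) auto
  also have "integral {2*pi..b+2*pi} f = integral {0..b} f"
    using integral_shift_real_ivl[of "2*pi" "2*pi" "b+2*pi" f] per by (simp add: periodic2pi_def)
  also have "integral {b..2*pi} f + integral {0..b} f = integral {0..2*pi} f"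
    using b integrable_on_interval_continuous[OF cont] Henstock_Kurzweil_Integration.integral_combine[of 0 b "2*pi" f]
    by simp
  finally show ?thesis .
qed

lemma Tint_eq_integral_period:
  fixes f :: "real \<Rightarrow> real"
  assumes "continuous_on UNIV f" and "periodic2pi f"
  shows "Tint f = integral {a..a+2*pi} f / (2*pi)"
  using Tint_eq_integral integral_period_shift assms by simp

lemma periodic2pi_family_bounded:
  fixes H :: "real \<Rightarrow> real \<Rightarrow> real"
  assumes "compact A" and cont: "continuous_on (A \<times> UNIV) (\<lambda>(t, x). H t x)"
    and per: "\<And>t. t \<in> A \<Longrightarrow> periodic2pi (H t)"
  obtains B where "\<And>t x. t \<in> A \<Longrightarrow> \<bar>H t x\<bar> \<le> B"
proof -
  have "compact ((\<lambda>(t, x). H t x) ` (A \<times> {0..2*pi}))"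
    by (rule compact_continuous_image[OF continuous_on_subset[OF cont]])
       (use \<open>compact A\<close> in \<open>auto intro: compact_Times\<close>)
  then obtain B where B: "\<And>z. z \<in> (\<lambda>(t, x). H t x) ` (A \<times> {0..2*pi}) \<Longrightarrow> norm z \<le> B"
    using compact_imp_bounded bounded_iff by metis
  have "\<bar>H t x\<bar> \<le> B" if "t \<in> A" for t x
  proof -
    have "(t, tmod x) \<in> A \<times> {0..2*pi}" using that tmod_in_period[of x] by auto
    with B have "\<bar>H t (tmod x)\<bar> \<le> B" by force
    then show ?thesis using periodic2pi_tmod[OF per[OF that]] by simp
  qed
  then show thesis by (rule that)
qed

lemma periodic2pi_attains_max:
  fixes f :: "real \<Rightarrow> real"
  assumes cont: "continuous_on UNIV f" and per: "periodic2pi f"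
  obtains x0 where "\<And>x. f x \<le> f x0"
proof -
  have "\<exists>x0\<in>{0..2*pi}. \<forall>y\<in>{0..2*pi}. f y \<le> f x0"
    by (rule continuous_attains_sup) (auto intro: continuous_on_subset[OF cont])
  then obtain x0 where "\<And>y. y \<in> {0..2*pi} \<Longrightarrow> f y \<le> f x0" by blast
  then have "f x \<le> f x0" for x
    using periodic2pi_tmod[OF per, of x] tmod_in_period[of x] by force
  then show thesis by (rule that)
qed

lemma periodic2pi_attains_min:
  fixes f :: "real \<Rightarrow> real"
  assumes "continuous_on UNIV f" and "periodic2pi f"
  obtains x0 where "\<And>x. f x0 \<le> f x"
proof -
  have neg: "continuous_on UNIV (\<lambda>x. - f x)" "periodic2pi (\<lambda>x. - f x)"
    using assms by (auto intro: continuous_intros simp: periodic2pi_def)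
  obtain x0 where "\<And>x. - f x \<le> - f x0" using periodic2pi_attains_max[OF neg] by metis
  then have "f x0 \<le> f x" for x by (metis neg_le_iff_le)
  then show thesis by (rule that)
qed

lemma periodic2pi_bounded:
  fixes f :: "real \<Rightarrow> real"
  assumes "continuous_on UNIV f" and "periodic2pi f"
  obtains B where "\<And>x. \<bar>f x\<bar> \<le> B"
proof -
  obtain x1 x2 where "\<And>x. f x \<le> f x1" "\<And>x. f x2 \<le> f x"
    using periodic2pi_attains_max[OF assms] periodic2pi_attains_min[OF assms] by metis
  then have "\<bar>f x\<bar> \<le> max \<bar>f x1\<bar> \<bar>f x2\<bar>" for x
    by (smt (verit) abs_le_iff max.cobounded1 max.cobounded2)
  then show thesis by (rule that)
qed

lemma periodic2pi_deriv:
  assumes per: "periodic2pi f" and deriv: "\<And>x. (f has_real_derivative f' x) (at x)"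
  shows "periodic2pi f'"
  unfolding periodic2pi_def
proof
  fix x
  have "((\<lambda>x. x + 2*pi) has_real_derivative 1) (at x)"
    by (auto intro!: derivative_eq_intros)
  from DERIV_chain2[OF deriv this]
  have "((\<lambda>x. f (x + 2*pi)) has_real_derivative f' (x + 2*pi)) (at x)" by simp
  moreover have "(\<lambda>x. f (x + 2*pi)) = f" using per by (auto simp: periodic2pi_def)
  ultimately show "f' (x + 2*pi) = f' x" using deriv[of x] DERIV_unique by metis
qed

section \<open>Calculus on the time interval\<close>

lemma mvt_within:
  fixes f :: "real \<Rightarrow> real"
  assumes "a \<le> b" and "{a..b} \<subseteq> S"
    and "\<And>s. s \<in> S \<Longrightarrow> (f has_real_derivative f' s) (at s within S)"
  obtains \<xi> where "\<xi> \<in> {a..b}" and "f b - f a = f' \<xi> * (b - a)"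
proof -
  have "\<exists>\<xi>\<in>{a..b}. f b - f a = (\<lambda>h. f' \<xi> * h) (b - a)"
  proof (rule mvt_very_simple[OF assms(1)])
    fix x assume "a \<le> x" "x \<le> b"
    then have "x \<in> S" using assms(2) by auto
    from assms(3)[OF this] have "(f has_real_derivative f' x) (at x within {a..b})"
      using assms(2) by (rule DERIV_subset)
    then show "(f has_derivative (\<lambda>h. f' x * h)) (at x within {a..b})"
      by (simp add: has_field_derivative_def)
  qed
  then show thesis using that by auto
qed

lemma has_real_derivative_within_01_unique:
  assumes "t \<in> {0..1::real}"
    and "(f has_real_derivative a) (at t within {0..1})"
    and "(f has_real_derivative b) (at t within {0..1})"
  shows "a = b"
  using vector_derivative_unique_within_closed_interval[of 0 1 t f a b] assms
  by (simp add: has_real_derivative_iff_has_vector_derivative)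

lemma nonincreasing_if_derivative_nonpos_01:
  fixes f :: "real \<Rightarrow> real"
  assumes "\<And>s. s \<in> {0..1} \<Longrightarrow> (f has_real_derivative f' s) (at s within {0..1})"
    and "\<And>s. s \<in> {0..1} \<Longrightarrow> f' s \<le> 0"
    and "t \<in> {0..1}"
  shows "f t \<le> f 0"
proof -
  obtain \<xi> where "\<xi> \<in> {0..t}" "f t - f 0 = f' \<xi> * (t - 0)"
    using mvt_within[of 0 t "{0..1}" f f'] assms(1,3) by auto
  moreover have "f' \<xi> * t \<le> 0"
    using assms(2,3) \<open>\<xi> \<in> {0..t}\<close> by (simp add: mult_nonpos_nonneg)
  ultimately show ?thesis by simp
qed

lemma gronwall_two_sided:
  fixes D D' :: "real \<Rightarrow> real"
  assumes deriv: "\<And>s. s \<in> {0..1} \<Longrightarrow> (D has_real_derivative D' s) (at s within {0..1})"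
    and bound: "\<And>s. s \<in> {0..1} \<Longrightarrow> \<bar>D' s\<bar> \<le> c * D s"
    and t: "t \<in> {0..1}"
  shows "D t \<le> exp (c * t) * D 0" and "D 0 \<le> exp (c * t) * D t"
proof -
  have "exp (- (c * t)) * D t \<le> exp (- (c * 0)) * D 0"
  proof (rule nonincreasing_if_derivative_nonpos_01[OF _ _ t])
    fix s :: real assume s: "s \<in> {0..1}"
    show "((\<lambda>s. exp (- (c * s)) * D s) has_real_derivative exp (- (c * s)) * (D' s - c * D s))
        (at s within {0..1})"
      using deriv[OF s] by (auto intro!: derivative_eq_intros simp: algebra_simps)
    show "exp (- (c * s)) * (D' s - c * D s) \<le> 0"
      using bound[OF s] by (simp add: mult_nonneg_nonpos)
  qed
  then have "exp (c * t) * (exp (- (c * t)) * D t) \<le> exp (c * t) * D 0" by simp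
  then show "D t \<le> exp (c * t) * D 0" by (simp add: mult.assoc[symmetric] exp_add[symmetric])
  have "- (exp (c * t) * D t) \<le> - (exp (c * 0) * D 0)"
  proof (rule nonincreasing_if_derivative_nonpos_01[OF _ _ t])
    fix s :: real assume s: "s \<in> {0..1}"
    show "((\<lambda>s. - (exp (c * s) * D s)) has_real_derivative - (exp (c * s) * (D' s + c * D s)))
        (at s within {0..1})"
      using deriv[OF s] by (auto intro!: derivative_eq_intros simp: algebra_simps)
    show "- (exp (c * s) * (D' s + c * D s)) \<le> 0"
      using bound[OF s] by simp
  qed
  then show "D 0 \<le> exp (c * t) * D t" by simp
qed

lemma ode_solutions_dist_bounds:
  fixes V :: "real \<Rightarrow> real \<Rightarrow> real" and Y1 Y2 :: "real \<Rightarrow> real"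
  assumes lip: "\<And>s a b. s \<in> {0..1} \<Longrightarrow> \<bar>V s a - V s b\<bar> \<le> L * \<bar>a - b\<bar>"
    and Y1: "\<And>s. s \<in> {0..1} \<Longrightarrow> (Y1 has_real_derivative V s (Y1 s)) (at s within {0..1})"
    and Y2: "\<And>s. s \<in> {0..1} \<Longrightarrow> (Y2 has_real_derivative V s (Y2 s)) (at s within {0..1})"
    and t: "t \<in> {0..1}"
  shows "\<bar>Y1 t - Y2 t\<bar> \<le> exp (L*t) * \<bar>Y1 0 - Y2 0\<bar>"
    and "\<bar>Y1 0 - Y2 0\<bar> \<le> exp (L*t) * \<bar>Y1 t - Y2 t\<bar>"
proof -
  define D where "D s = (Y1 s - Y2 s)^2" for s
  define D' where "D' s = 2 * (Y1 s - Y2 s) * (V s (Y1 s) - V s (Y2 s))" for s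
  have "(D has_real_derivative D' s) (at s within {0..1})" if "s \<in> {0..1}" for s
    unfolding D_def D'_def using Y1[OF that] Y2[OF that]
    by (auto intro!: derivative_eq_intros simp: algebra_simps)
  moreover have "\<bar>D' s\<bar> \<le> (2*L) * D s" if "s \<in> {0..1}" for s
  proof -
    have "\<bar>D' s\<bar> = 2 * \<bar>Y1 s - Y2 s\<bar> * \<bar>V s (Y1 s) - V s (Y2 s)\<bar>"
      unfolding D'_def abs_mult by simp
    also have "\<dots> \<le> 2 * \<bar>Y1 s - Y2 s\<bar> * (L * \<bar>Y1 s - Y2 s\<bar>)"
      by (intro mult_left_mono lip that) auto
    also have "\<dots> = (2*L) * D s" by (simp add: D_def power2_eq_square abs_mult_self_eq)
    finally show ?thesis .
  qed
  ultimately have "D t \<le> exp (2*L*t) * D 0" "D 0 \<le> exp (2*L*t) * D t"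
    using gronwall_two_sided[of D D' "2*L", OF _ _ t] by (auto simp: mult.assoc)
  moreover have "exp (2*L*t) = (exp (L*t))^2"
    by (simp add: exp_double[symmetric] mult.assoc)
  ultimately have "\<bar>Y1 t - Y2 t\<bar>^2 \<le> (exp (L*t) * \<bar>Y1 0 - Y2 0\<bar>)^2"
    "\<bar>Y1 0 - Y2 0\<bar>^2 \<le> (exp (L*t) * \<bar>Y1 t - Y2 t\<bar>)^2"
    by (simp_all add: D_def power_mult_distrib)
  then show "\<bar>Y1 t - Y2 t\<bar> \<le> exp (L*t) * \<bar>Y1 0 - Y2 0\<bar>"
    and "\<bar>Y1 0 - Y2 0\<bar> \<le> exp (L*t) * \<bar>Y1 t - Y2 t\<bar>"
    by (auto intro: power2_le_imp_le)
qed

lemma tendsto_time_quotient_moving_point: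
  fixes g G :: "real \<Rightarrow> real \<Rightarrow> real" and Y :: "real \<Rightarrow> real"
  assumes G_cont: "continuous_on ({0..1} \<times> UNIV) (\<lambda>(s, y). G s y)"
    and g_time: "\<And>s y. s \<in> {0..1} \<Longrightarrow> ((\<lambda>s. g s y) has_real_derivative G s y) (at s within {0..1})"
    and Y: "(Y \<longlongrightarrow> Y t) (at t within {0..1})"
    and t: "t \<in> {0..1}"
  shows "((\<lambda>s. (g s (Y s) - g t (Y s)) / (s - t)) \<longlongrightarrow> G t (Y t)) (at t within {0..1})"
proof (rule tendstoI)
  let ?T = "{0..1::real}"
  fix e :: real assume "e > 0"
  then obtain d where d: "d > 0" "\<And>p. p \<in> ?T \<times> UNIV \<Longrightarrow> dist p (t, Y t) < d \<Longrightarrow>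
      dist ((\<lambda>(s, y). G s y) p) ((\<lambda>(s, y). G s y) (t, Y t)) < e"
    using G_cont t unfolding continuous_on_iff by (metis SigmaI UNIV_I)
  have "eventually (\<lambda>s. dist (Y s) (Y t) < d/2) (at t within ?T)"
    using Y d(1) by (intro tendstoD) auto
  moreover have "eventually (\<lambda>s. s \<in> ?T \<and> s \<noteq> t \<and> dist s t < d/2) (at t within ?T)"
    unfolding eventually_at using d(1) by (intro exI[of _ "d/2"]) auto
  ultimately show "eventually (\<lambda>s. dist ((g s (Y s) - g t (Y s)) / (s - t)) (G t (Y t)) < e) (at t within ?T)"
  proof eventually_elim
    case (elim s)
    then have s: "s \<in> ?T" "s \<noteq> t" "\<bar>s - t\<bar> < d/2" "\<bar>Y s - Y t\<bar> < d/2"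
      by (auto simp: dist_real_def)
    have "min s t \<le> max s t" "{min s t..max s t} \<subseteq> ?T" using s t by auto
    then obtain \<xi> where \<xi>: "\<xi> \<in> {min s t..max s t}"
      "g (max s t) (Y s) - g (min s t) (Y s) = G \<xi> (Y s) * (max s t - min s t)"
      using mvt_within[where f="\<lambda>u. g u (Y s)" and f'="\<lambda>u. G u (Y s)"] g_time by metis
    have "(g s (Y s) - g t (Y s)) / (s - t) = G \<xi> (Y s)"
      using \<xi> s(2) by (cases "s \<le> t") (auto simp: field_simps)
    moreover have "\<bar>\<xi> - t\<bar> \<le> \<bar>s - t\<bar>"
      using \<xi>(1) by (auto simp: min_def max_def split: if_splits)
    then have "dist (\<xi>, Y s) (t, Y t) < d"
      using s sqrt_sum_squares_le_sum_abs[of "\<xi> - t" "Y s - Y t"]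
      by (simp add: dist_Pair_Pair dist_real_def)
    moreover have "\<xi> \<in> ?T" using \<xi>(1) s t by auto
    ultimately show ?case using d(2)[of "(\<xi>, Y s)"] by auto
  qed
qed

lemma has_real_derivative_joint_chain:
  fixes g G :: "real \<Rightarrow> real \<Rightarrow> real" and Y :: "real \<Rightarrow> real"
  assumes G_cont: "continuous_on ({0..1} \<times> UNIV) (\<lambda>(s, y). G s y)"
    and g_time: "\<And>s y. s \<in> {0..1} \<Longrightarrow> ((\<lambda>s. g s y) has_real_derivative G s y) (at s within {0..1})"
    and g_space: "(g t has_real_derivative g') (at (Y t))"
    and Y: "(Y has_real_derivative Y') (at t within {0..1})"
    and t: "t \<in> {0..1}"
  shows "((\<lambda>s. g s (Y s)) has_real_derivative G t (Y t) + g' * Y') (at t within {0..1})"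
proof -
  have "(Y \<longlongrightarrow> Y t) (at t within {0..1})"
    using DERIV_continuous[OF Y] by (simp add: continuous_within)
  from tendsto_time_quotient_moving_point[OF G_cont g_time this t]
  have "((\<lambda>s. (g s (Y s) - g t (Y s)) / (s - t)) \<longlongrightarrow> G t (Y t)) (at t within {0..1})" .
  moreover have "((\<lambda>s. (g t (Y s) - g t (Y t)) / (s - t)) \<longlongrightarrow> g' * Y') (at t within {0..1})"
    using DERIV_chain2[OF g_space Y] unfolding has_field_derivative_iff .
  ultimately have "((\<lambda>s. (g s (Y s) - g t (Y s)) / (s - t) + (g t (Y s) - g t (Y t)) / (s - t))
      \<longlongrightarrow> G t (Y t) + g' * Y') (at t within {0..1})"
    by (rule tendsto_add)
  then show ?thesis
    unfolding has_field_derivative_iff by (simp add: add_divide_distrib[symmetric])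
qed

lemma has_real_derivative_Tint:
  fixes f f' :: "real \<Rightarrow> real \<Rightarrow> real"
  assumes t: "t \<in> {0..1}"
    and deriv: "\<And>s x. s \<in> {0..1} \<Longrightarrow> ((\<lambda>s. f s x) has_real_derivative f' s x) (at s within {0..1})"
    and cont: "\<And>s. s \<in> {0..1} \<Longrightarrow> continuous_on UNIV (f s)"
    and f_bound: "\<And>s x. s \<in> {0..1} \<Longrightarrow> \<bar>f s x\<bar> \<le> C"
    and f'_bound: "\<And>s x. s \<in> {0..1} \<Longrightarrow> \<bar>f' s x\<bar> \<le> B"
  shows "((\<lambda>s. Tint (f s)) has_real_derivative Tint (f' t)) (at t within {0..1})"
  unfolding has_field_derivative_iff tendsto_at_iff_sequentially
proof (intro allI impI)
  let ?T = "{0..1::real}"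
  fix S :: "nat \<Rightarrow> real" assume S: "\<forall>n. S n \<in> ?T - {t}" "S \<longlonglongrightarrow> t"
  define q where "q n x = (f (S n) x - f t x) / (S n - t)" for n x
  have integrable: "integrable Tmeas (f s)" if "s \<in> ?T" for s
    using cont[OF that] f_bound[OF that] by (rule integrable_Tmeas_continuous_bounded)
  have "(Tint (f (S n)) - Tint (f t)) / (S n - t) = integral\<^sup>L Tmeas (q n)" for n
    using S(1) integrable[of "S n"] integrable[OF t] unfolding q_def Tint_def by auto
  moreover have "(\<lambda>n. integral\<^sup>L Tmeas (q n)) \<longlonglongrightarrow> integral\<^sup>L Tmeas (f' t)"
  proof (rule integral_dominated_convergence[where w="\<lambda>_. B"])
    have "((\<lambda>s. (f s x - f t x) / (s - t)) \<longlongrightarrow> f' t x) (at t within ?T)" for x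
      using deriv[OF t, of x] unfolding has_field_derivative_iff .
    then have lim: "(\<lambda>n. q n x) \<longlonglongrightarrow> f' t x" for x
      unfolding tendsto_at_iff_sequentially q_def comp_def using S by blast
    then show "AE x in Tmeas. (\<lambda>n. q n x) \<longlonglongrightarrow> f' t x" by simp
    show q_meas: "q n \<in> borel_measurable Tmeas" for n
      using S(1) cont[of "S n"] cont[OF t] unfolding q_def
      by (intro borel_measurable_Tmeas_continuous continuous_intros) auto
    show "f' t \<in> borel_measurable Tmeas"
      using lim q_meas by (rule borel_measurable_LIMSEQ_real)
    show "integrable Tmeas (\<lambda>_. B)" by simp
    show "AE x in Tmeas. norm (q n x) \<le> B" for n
    proof -
      have "\<bar>f (S n) x - f t x\<bar> \<le> B * \<bar>S n - t\<bar>" for x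
        using field_differentiable_bound[of ?T "\<lambda>s. f s x" "\<lambda>s. f' s x" B "S n" t]
          deriv f'_bound S(1) t by auto
      then show ?thesis using S(1) by (simp add: q_def abs_divide divide_le_eq)
    qed
  qed
  ultimately show "((\<lambda>s. (Tint (f s) - Tint (f t)) / (s - t)) \<circ> S) \<longlonglongrightarrow> Tint (f' t)"
    by (simp add: comp_def Tint_def)
qed

lemma has_real_derivative_partial_snd:
  fixes F :: "real \<times> real \<Rightarrow> real"
  assumes "\<forall>p\<in>A \<times> UNIV. (F has_derivative (\<lambda>h. D1 p * fst h + D2 p * snd h)) (at p within A \<times> UNIV)"
    and "t \<in> A"
  shows "((\<lambda>x. F (t, x)) has_real_derivative D2 (t, x)) (at x)"
proof -
  have "((\<lambda>x. F (t, x)) has_derivative (\<lambda>y. D1 (t, x) * fst (0::real, y) + D2 (t, x) * snd (0::real, y)))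
      (at x within UNIV)"
    by (rule has_derivative_in_compose2[where t="A \<times> UNIV" and g=F and f="\<lambda>x. (t, x)"])
       (use assms in \<open>auto intro!: derivative_eq_intros\<close>)
  then show ?thesis by (simp add: has_field_derivative_def)
qed

lemma integral_rescaled:
  fixes H :: "real \<Rightarrow> real"
  assumes cont: "continuous_on UNIV H" and "0 < l" and "0 \<le> a"
  shows "integral {x0 - a/l..x0 + a/l} (\<lambda>x. H (l * (x - x0))) = integral {-a..a} H / l"
proof -
  have "((\<lambda>x. l *\<^sub>R H (l * (x - x0))) has_integral integral {l * ((x0 - a/l) - x0)..l * ((x0 + a/l) - x0)} H)
      {x0 - a/l..x0 + a/l}"
    by (rule has_integral_substitution[where c="-a" and d=a])
       (use assms in \<open>auto intro!: derivative_eq_intros continuous_on_subset[OF cont] simp: field_simps\<close>)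
  moreover have "l * ((x0 - a/l) - x0) = -a" "l * ((x0 + a/l) - x0) = a"
    using assms by (auto simp: field_simps)
  ultimately have "((\<lambda>x. (1/l) * (l * H (l * (x - x0)))) has_integral (1/l) * integral {-a..a} H)
      {x0 - a/l..x0 + a/l}"
    by (intro has_integral_mult_right) simp
  then show ?thesis using \<open>0 < l\<close> by (simp add: integral_unique)
qed

lemma integral_pos_continuous:
  fixes f :: "real \<Rightarrow> real"
  assumes cont: "continuous_on UNIV f" and nonneg: "\<And>x. 0 \<le> f x"
    and "a < b" and "x \<in> {a..b}" and "0 < f x"
  shows "0 < integral {a..b} f"
proof -
  have int: "f integrable_on {a..b}" using cont by (rule integrable_on_interval_continuous)
  have "integral {a..b} f \<noteq> 0"
  proof
    assume "integral {a..b} f = 0"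
    then have "(f has_integral 0) (cbox a b)"
      using int by (metis has_integral_integral cbox_interval)
    then have "f x = 0"
      by (intro has_integral_0_cbox_imp_0[of a b f x])
         (use assms in \<open>auto intro: continuous_on_subset[OF cont]\<close>)
    with \<open>0 < f x\<close> show False by simp
  qed
  moreover have "0 \<le> integral {a..b} f" using nonneg by (intro integral_nonneg[OF int]) auto
  ultimately show ?thesis by simp
qed

section \<open>Push-forward densities under bi-Lipschitz circle maps\<close>

lemma cos_le_cos_of_dist_multiples_2pi:
  fixes \<theta> \<delta> :: real
  assumes "0 \<le> \<delta>" "\<delta> \<le> pi" and far: "\<And>k::int. \<delta> \<le> \<bar>\<theta> - 2*pi * of_int k\<bar>"
  shows "cos \<theta> \<le> cos \<delta>"
proof -
  define k where "k = \<lfloor>(\<theta> + pi) / (2*pi)\<rfloor>"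
  have "of_int k \<le> (\<theta> + pi) / (2*pi)" "(\<theta> + pi) / (2*pi) < of_int k + 1"
    unfolding k_def by linarith+
  then have "\<bar>\<theta> - 2*pi * of_int k\<bar> \<le> pi"
    by (simp add: field_simps abs_le_iff)
  have "cos \<theta> = cos \<bar>\<theta> - 2*pi * of_int k\<bar>"
    using periodic2pi_int[of cos "\<theta> - 2*pi * of_int k" k] by (simp add: periodic2pi_def)
  also have "\<dots> \<le> cos \<delta>"
    using far[of k] \<open>\<bar>\<theta> - 2*pi * of_int k\<bar> \<le> pi\<close> \<open>0 \<le> \<delta>\<close> by (intro cos_monotone_0_pi_le) auto
  finally show ?thesis .
qed

lemma abs_le_dist_multiples_2pi:
  fixes z :: real
  assumes "\<bar>z\<bar> \<le> pi"
  shows "\<bar>z\<bar> \<le> \<bar>z - 2*pi * of_int k\<bar>"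
proof (cases "k = 0")
  case False
  then have "2*pi \<le> \<bar>2*pi * of_int k\<bar>" by (simp add: abs_mult)
  then show ?thesis using assms by linarith
qed simp

definition bump :: "real \<Rightarrow> real \<Rightarrow> real" where
  "bump r \<theta> = max 0 (cos \<theta> - cos r)"

lemma continuous_on_bump: "continuous_on UNIV (bump r)"
  unfolding bump_def by (intro continuous_intros)

lemma bump_nonneg: "0 \<le> bump r \<theta>"
  by (simp add: bump_def)

lemma periodic2pi_bump: "periodic2pi (\<lambda>y. bump r (y - y0))"
  unfolding periodic2pi_def bump_def by (metis add_diff_eq cos_periodic diff_add_eq)

lemma bump_le_bump: "cos \<alpha> \<le> cos \<beta> \<Longrightarrow> bump r \<alpha> \<le> bump r \<beta>"
  by (simp add: bump_def)

lemma abs_less_if_bump_pos: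
  assumes "\<bar>\<theta>\<bar> \<le> pi" and "0 \<le> r" and "0 < bump r \<theta>"
  shows "\<bar>\<theta>\<bar> < r"
proof (rule ccontr)
  assume "\<not> \<bar>\<theta>\<bar> < r"
  with assms(1,2) have "cos \<bar>\<theta>\<bar> \<le> cos r" by (intro cos_monotone_0_pi_le) auto
  with assms(3) show False by (simp add: bump_def)
qed

lemma integral_bump_pos:
  assumes "0 < r" and "r \<le> pi"
  shows "0 < integral {-pi..pi} (bump r)"
proof (rule integral_pos_continuous[OF continuous_on_bump bump_nonneg])
  have "cos r < cos 0" using assms by (intro cos_monotone_0_pi) auto
  then show "0 < bump r 0" by (simp add: bump_def)
qed auto

lemma integral_bump_shift:
  "integral {y0 - pi..y0 + pi} (\<lambda>y. bump r (y - y0)) = integral {-pi..pi} (bump r)"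
  using integral_rescaled[OF continuous_on_bump, of 1 pi y0 r] by simp

lemma integral_bump_weighted_near:
  fixes \<sigma> :: "real \<Rightarrow> real"
  assumes cont: "continuous_on UNIV \<sigma>" and r: "0 < r" "r \<le> pi"
    and near: "\<And>y. \<bar>y - y0\<bar> < r \<Longrightarrow> \<bar>\<sigma> y - \<sigma> y0\<bar> \<le> \<epsilon>"
  shows "\<bar>integral {y0 - pi..y0 + pi} (\<lambda>y. bump r (y - y0) * \<sigma> y) - \<sigma> y0 * integral {-pi..pi} (bump r)\<bar>
      \<le> \<epsilon> * integral {-pi..pi} (bump r)"
proof -
  let ?h = "\<lambda>y. bump r (y - y0)" and ?W = "{y0 - pi..y0 + pi}"
  have h_cont: "continuous_on UNIV ?h"
    by (rule continuous_on_compose2[OF continuous_on_bump]) (auto intro: continuous_intros)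
  have "integral ?W (\<lambda>y. ?h y * \<sigma> y) - \<sigma> y0 * integral {-pi..pi} (bump r)
      = integral ?W (\<lambda>y. ?h y * (\<sigma> y - \<sigma> y0))"
    using integral_bump_shift[of y0 r] integrable_on_interval_continuous[OF h_cont]
    by (simp add: right_diff_distrib integral_diff integrable_on_interval_continuous h_cont cont
        continuous_intros)
  moreover have "norm (integral ?W (\<lambda>y. ?h y * (\<sigma> y - \<sigma> y0))) \<le> integral ?W (\<lambda>y. \<epsilon> * ?h y)"
  proof (rule integral_norm_bound_integral)
    show "(\<lambda>y. ?h y * (\<sigma> y - \<sigma> y0)) integrable_on ?W" "(\<lambda>y. \<epsilon> * ?h y) integrable_on ?W"
      by (intro integrable_on_interval_continuous continuous_intros h_cont cont)+
    fix y assume "y \<in> ?W"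
    show "norm (?h y * (\<sigma> y - \<sigma> y0)) \<le> \<epsilon> * ?h y"
    proof (cases "?h y = 0")
      case False
      with \<open>y \<in> ?W\<close> r have "\<bar>y - y0\<bar> < r"
        using abs_less_if_bump_pos[of "y - y0" r] bump_nonneg[of r "y - y0"] by auto
      then show ?thesis
        using mult_right_mono[OF near bump_nonneg, of y r "y - y0"] bump_nonneg[of r "y - y0"]
        by (simp add: abs_mult mult.commute)
    qed simp
  qed
  moreover have "integral ?W (\<lambda>y. \<epsilon> * ?h y) = \<epsilon> * integral {-pi..pi} (bump r)"
    using integral_bump_shift[of y0 r] by simp
  ultimately show ?thesis by (metis real_norm_def)
qed

text \<open>\<open>Y\<close> is the lift to \<open>\<real>\<close> of a degree-one bi-Lipschitz homeomorphism of the circle.\<close>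

locale bilipschitz_circle_map =
  fixes Y :: "real \<Rightarrow> real" and K :: real
  assumes K_ge_1: "1 \<le> K"
    and lipschitz: "\<And>x y. \<bar>Y x - Y y\<bar> \<le> K * \<bar>x - y\<bar>"
    and colipschitz: "\<And>x y. \<bar>x - y\<bar> \<le> K * \<bar>Y x - Y y\<bar>"
    and periodic_displacement: "periodic2pi (\<lambda>x. Y x - x)"
begin

lemma shift_int: "Y (x + 2*pi * of_int k) = Y x + 2*pi * of_int k"
  using periodic2pi_int[OF periodic_displacement, of x k] by simp

lemma continuous: "continuous_on UNIV Y"
  by (rule lipschitz_on_continuous_on[where L=K])
     (use lipschitz K_ge_1 in \<open>auto intro!: lipschitz_onI simp: dist_real_def\<close>)

lemma surj: obtains x where "Y x = y"
proof -
  define k where "k = \<lfloor>(y - Y 0) / (2*pi)\<rfloor>"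
  have "of_int k \<le> (y - Y 0) / (2*pi)" "(y - Y 0) / (2*pi) \<le> of_int (k + 1)"
    unfolding k_def by linarith+
  then have "Y (2*pi * of_int k) \<le> y" "y \<le> Y (2*pi * of_int (k + 1))"
    using shift_int[of 0 k] shift_int[of 0 "k + 1"] by (simp_all add: field_simps)
  then have "\<exists>x\<ge>2*pi * of_int k. x \<le> 2*pi * of_int (k + 1) \<and> Y x = y"
    by (intro IVT') (auto intro: continuous_on_subset[OF continuous])
  then show thesis using that by blast
qed

lemma integral_bump_compose_ge:
  "integral {-pi..pi} (bump r) / K \<le> integral {c - pi..c + pi} (\<lambda>x. bump r (Y x - Y c))"
proof -
  have hY_cont: "continuous_on UNIV (\<lambda>x. bump r (Y x - Y c))"
    by (rule continuous_on_compose2[OF continuous_on_bump]) (auto intro: continuous_intros continuous)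
  have "integral {-pi..pi} (bump r) / K = integral {c - pi/K..c + pi/K} (\<lambda>x. bump r (K * (x - c)))"
    using integral_rescaled[OF continuous_on_bump, of K pi c r] K_ge_1 by simp
  also have "\<dots> \<le> integral {c - pi/K..c + pi/K} (\<lambda>x. bump r (Y x - Y c))"
  proof (rule integral_le)
    show "(\<lambda>x. bump r (K * (x - c))) integrable_on {c - pi/K..c + pi/K}"
      by (rule integrable_on_interval_continuous, rule continuous_on_compose2[OF continuous_on_bump])
         (auto intro!: continuous_intros)
    show "(\<lambda>x. bump r (Y x - Y c)) integrable_on {c - pi/K..c + pi/K}"
      by (rule integrable_on_interval_continuous[OF hY_cont])
    fix x assume "x \<in> {c - pi/K..c + pi/K}"
    then have "\<bar>x - c\<bar> \<le> pi / K" by auto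
    then have "K * \<bar>x - c\<bar> \<le> pi" using K_ge_1 by (simp add: field_simps)
    moreover have "\<bar>Y x - Y c\<bar> \<le> K * \<bar>x - c\<bar>" by (rule lipschitz)
    ultimately have "cos \<bar>K * (x - c)\<bar> \<le> cos \<bar>Y x - Y c\<bar>"
      using K_ge_1 by (intro cos_monotone_0_pi_le) (auto simp: abs_mult)
    then show "bump r (K * (x - c)) \<le> bump r (Y x - Y c)"
      by (intro bump_le_bump) simp
  qed
  also have "\<dots> \<le> integral {c - pi..c + pi} (\<lambda>x. bump r (Y x - Y c))"
  proof (rule integral_subset_le)
    have "pi / K \<le> pi" using K_ge_1 by (simp add: divide_le_eq)
    then show "{c - pi/K..c + pi/K} \<subseteq> {c - pi..c + pi}" by auto
  qed (auto intro: integrable_on_interval_continuous[OF hY_cont] bump_nonneg)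
  finally show ?thesis .
qed

text \<open>\<open>Y\<close> commutes with the deck translations, so the colipschitz bound controls the distance from
  \<open>Y x - Y c\<close> to all of \<open>2\<pi>\<int>\<close>, which is what \<open>cos\<close> sees.\<close>

lemma cos_le_cos_scaled:
  assumes x: "\<bar>x - c\<bar> \<le> pi"
  shows "cos (Y x - Y c) \<le> cos ((1/K) * (x - c))"
proof -
  have "cos (Y x - Y c) \<le> cos (\<bar>x - c\<bar> / K)"
  proof (rule cos_le_cos_of_dist_multiples_2pi)
    show "0 \<le> \<bar>x - c\<bar> / K" "\<bar>x - c\<bar> / K \<le> pi"
      using x K_ge_1 by (auto simp: divide_le_eq intro: order_trans)
    fix k :: int
    have "\<bar>x - c\<bar> \<le> \<bar>x - (c + 2*pi * of_int k)\<bar>"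
      using abs_le_dist_multiples_2pi[OF x, of k] by (simp add: algebra_simps)
    also have "\<dots> \<le> K * \<bar>Y x - Y (c + 2*pi * of_int k)\<bar>" by (rule colipschitz)
    also have "Y x - Y (c + 2*pi * of_int k) = Y x - Y c - 2*pi * of_int k"
      by (simp add: shift_int)
    finally show "\<bar>x - c\<bar> / K \<le> \<bar>Y x - Y c - 2*pi * of_int k\<bar>"
      using K_ge_1 by (simp add: divide_le_eq mult.commute)
  qed
  also have "cos (\<bar>x - c\<bar> / K) = cos ((1/K) * (x - c))"
    using cos_abs_real[of "(1/K) * (x - c)"] K_ge_1 by (simp add: abs_mult)
  finally show ?thesis .
qed

lemma integral_bump_compose_le:
  "integral {c - pi..c + pi} (\<lambda>x. bump r (Y x - Y c)) \<le> K * integral {-pi..pi} (bump r)"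
proof -
  have "integral {c - pi..c + pi} (\<lambda>x. bump r (Y x - Y c))
      \<le> integral {c - pi..c + pi} (\<lambda>x. bump r ((1/K) * (x - c)))"
  proof (rule integral_le)
    show "(\<lambda>x. bump r (Y x - Y c)) integrable_on {c - pi..c + pi}"
      by (rule integrable_on_interval_continuous, rule continuous_on_compose2[OF continuous_on_bump])
         (auto intro: continuous_intros continuous)
    show "(\<lambda>x. bump r ((1/K) * (x - c))) integrable_on {c - pi..c + pi}"
      by (rule integrable_on_interval_continuous, rule continuous_on_compose2[OF continuous_on_bump])
         (use K_ge_1 in \<open>auto intro!: continuous_intros\<close>)
    fix x assume "x \<in> {c - pi..c + pi}"
    then have "cos (Y x - Y c) \<le> cos ((1/K) * (x - c))" by (intro cos_le_cos_scaled) auto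
    then show "bump r (Y x - Y c) \<le> bump r ((1/K) * (x - c))" by (rule bump_le_bump)
  qed
  also have "\<dots> = K * integral {-(pi/K)..pi/K} (bump r)"
    using integral_rescaled[OF continuous_on_bump, of "1/K" "pi/K" c r] K_ge_1 by simp
  also have "\<dots> \<le> K * integral {-pi..pi} (bump r)"
  proof (intro mult_left_mono integral_subset_le)
    have "pi / K \<le> pi" using K_ge_1 by (simp add: divide_le_eq)
    then show "{-(pi/K)..pi/K} \<subseteq> {-pi..pi}" by auto
  qed (use K_ge_1 integrable_on_interval_continuous[OF continuous_on_bump] bump_nonneg in auto)
  finally show ?thesis .
qed

lemma integral_bump_compose_weighted_bounds:
  fixes \<rho> :: "real \<Rightarrow> real"
  assumes cont: "continuous_on UNIV \<rho>" and "0 \<le> m" and lower: "\<And>x. m \<le> \<rho> x"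
    and upper: "\<And>x. \<rho> x \<le> M"
  shows "m * integral {-pi..pi} (bump r) / K
        \<le> integral {c - pi..c + pi} (\<lambda>x. bump r (Y x - Y c) * \<rho> x)"
    and "integral {c - pi..c + pi} (\<lambda>x. bump r (Y x - Y c) * \<rho> x)
        \<le> M * K * integral {-pi..pi} (bump r)"
proof -
  let ?hY = "\<lambda>x. bump r (Y x - Y c)" and ?W = "{c - pi..c + pi}"
  have hY_cont: "continuous_on UNIV ?hY"
    by (rule continuous_on_compose2[OF continuous_on_bump]) (auto intro: continuous_intros continuous)
  have "m * integral {-pi..pi} (bump r) / K \<le> m * integral ?W ?hY"
    using mult_left_mono[OF integral_bump_compose_ge[of r c] \<open>0 \<le> m\<close>] by simp
  also have "\<dots> = integral ?W (\<lambda>x. m * ?hY x)" by simp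
  also have "\<dots> \<le> integral ?W (\<lambda>x. ?hY x * \<rho> x)"
    using lower bump_nonneg
    by (intro integral_le integrable_on_interval_continuous continuous_intros hY_cont cont)
       (metis mult.commute mult_right_mono)
  finally show "m * integral {-pi..pi} (bump r) / K \<le> integral ?W (\<lambda>x. ?hY x * \<rho> x)" .
  have "0 \<le> M" using \<open>0 \<le> m\<close> lower[of 0] upper[of 0] by simp
  have "integral ?W (\<lambda>x. ?hY x * \<rho> x) \<le> integral ?W (\<lambda>x. M * ?hY x)"
    using upper bump_nonneg
    by (intro integral_le integrable_on_interval_continuous continuous_intros hY_cont cont)
       (metis mult.commute mult_right_mono)
  also have "\<dots> = M * integral ?W ?hY" by simp
  also have "\<dots> \<le> M * K * integral {-pi..pi} (bump r)"
    using integral_bump_compose_le[of c r] \<open>0 \<le> M\<close> by (simp add: mult.assoc mult_left_mono)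
  finally show "integral ?W (\<lambda>x. ?hY x * \<rho> x) \<le> M * K * integral {-pi..pi} (bump r)" .
qed

lemma integral_window_pushforward:
  fixes \<rho> \<sigma> h :: "real \<Rightarrow> real"
  assumes \<rho>_cont: "continuous_on UNIV \<rho>" and \<rho>_per: "periodic2pi \<rho>"
    and \<sigma>_cont: "continuous_on UNIV \<sigma>" and \<sigma>_per: "periodic2pi \<sigma>"
    and h_cont: "continuous_on UNIV h" and h_per: "periodic2pi h"
    and push: "Tint (\<lambda>x. h (Y x) * \<rho> x) = Tint (\<lambda>y. h y * \<sigma> y)"
  shows "integral {c - pi..c + pi} (\<lambda>x. h (Y x) * \<rho> x) = integral {Y c - pi..Y c + pi} (\<lambda>y. h y * \<sigma> y)"
proof -
  have "continuous_on UNIV (\<lambda>x. h (Y x) * \<rho> x)"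
    by (intro continuous_intros continuous_on_compose2[OF h_cont continuous] \<rho>_cont) auto
  moreover have "periodic2pi (\<lambda>x. h (Y x) * \<rho> x)"
    using h_per \<rho>_per shift_int[of _ 1] unfolding periodic2pi_def by simp
  moreover have "continuous_on UNIV (\<lambda>y. h y * \<sigma> y)"
    by (intro continuous_intros h_cont \<sigma>_cont)
  moreover have "periodic2pi (\<lambda>y. h y * \<sigma> y)"
    using h_per \<sigma>_per unfolding periodic2pi_def by simp
  moreover have "c - pi + 2*pi = c + pi" and "Y c - pi + 2*pi = Y c + pi" by simp_all
  ultimately show ?thesis
    using push Tint_eq_integral_period[of "\<lambda>x. h (Y x) * \<rho> x" "c - pi"]
      Tint_eq_integral_period[of "\<lambda>y. h y * \<sigma> y" "Y c - pi"] by (simp add: add.commute)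
qed

lemma pushforward_density_bounds:
  fixes \<rho> \<sigma> :: "real \<Rightarrow> real"
  assumes \<rho>_cont: "continuous_on UNIV \<rho>" and \<rho>_per: "periodic2pi \<rho>"
    and "0 \<le> m" and lower: "\<And>x. m \<le> \<rho> x" and upper: "\<And>x. \<rho> x \<le> M"
    and \<sigma>_cont: "continuous_on UNIV \<sigma>" and \<sigma>_per: "periodic2pi \<sigma>"
    and push: "\<And>h. continuous_on UNIV h \<Longrightarrow> periodic2pi h \<Longrightarrow>
        Tint (\<lambda>x. h (Y x) * \<rho> x) = Tint (\<lambda>y. h y * \<sigma> y)"
  shows "m / K \<le> \<sigma> y0" and "\<sigma> y0 \<le> M * K"
proof -
  obtain x0 where x0: "Y x0 = y0" by (rule surj)
  define I where "I r = integral {-pi..pi} (bump r)" for r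
  define W where "W r = integral {y0 - pi..y0 + pi} (\<lambda>y. bump r (y - y0) * \<sigma> y)" for r
  have bounds: "m * I r / K \<le> W r" "W r \<le> M * K * I r" for r
  proof -
    let ?h = "\<lambda>y. bump r (y - Y x0)"
    have h_cont: "continuous_on UNIV ?h"
      by (rule continuous_on_compose2[OF continuous_on_bump]) (auto intro: continuous_intros)
    have "integral {x0 - pi..x0 + pi} (\<lambda>x. ?h (Y x) * \<rho> x) = W r"
      unfolding W_def x0[symmetric]
      by (rule integral_window_pushforward[OF \<rho>_cont \<rho>_per \<sigma>_cont \<sigma>_per h_cont periodic2pi_bump
            push[OF h_cont periodic2pi_bump]])
    then show "m * I r / K \<le> W r" "W r \<le> M * K * I r"
      using integral_bump_compose_weighted_bounds[OF \<rho>_cont \<open>0 \<le> m\<close> lower upper, where r=r and c=x0]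
      by (simp_all add: I_def)
  qed
  have near: "\<exists>r. 0 < I r \<and> \<bar>W r - \<sigma> y0 * I r\<bar> \<le> \<epsilon> * I r" if "0 < \<epsilon>" for \<epsilon>
  proof -
    obtain d where "0 < d" and d: "\<And>y. dist y y0 < d \<Longrightarrow> dist (\<sigma> y) (\<sigma> y0) < \<epsilon>"
      using \<sigma>_cont \<open>0 < \<epsilon>\<close> unfolding continuous_on_iff by (metis UNIV_I)
    define r where "r = min d pi"
    have "0 < r" "r \<le> pi" using \<open>0 < d\<close> by (auto simp: r_def)
    moreover have "\<bar>\<sigma> y - \<sigma> y0\<bar> \<le> \<epsilon>" if "\<bar>y - y0\<bar> < r" for y
      using d[of y] that by (simp add: r_def dist_real_def)
    ultimately show ?thesis
      unfolding I_def W_def using integral_bump_pos integral_bump_weighted_near[OF \<sigma>_cont] by blast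
  qed
  show "m / K \<le> \<sigma> y0"
  proof (rule field_le_epsilon)
    fix \<epsilon> :: real assume "0 < \<epsilon>"
    then obtain r where "0 < I r" "\<bar>W r - \<sigma> y0 * I r\<bar> \<le> \<epsilon> * I r" using near by blast
    then have "(m / K) * I r \<le> (\<sigma> y0 + \<epsilon>) * I r" using bounds(1)[of r] by (simp add: algebra_simps)
    then show "m / K \<le> \<sigma> y0 + \<epsilon>" using \<open>0 < I r\<close> by (rule mult_right_le_imp_le)
  qed
  show "\<sigma> y0 \<le> M * K"
  proof (rule field_le_epsilon)
    fix \<epsilon> :: real assume "0 < \<epsilon>"
    then obtain r where "0 < I r" "\<bar>W r - \<sigma> y0 * I r\<bar> \<le> \<epsilon> * I r" using near by blast
    then have "(\<sigma> y0 - \<epsilon>) * I r \<le> (M * K) * I r" using bounds(2)[of r] by (simp add: algebra_simps)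
    then have "\<sigma> y0 - \<epsilon> \<le> M * K" using \<open>0 < I r\<close> by (rule mult_right_le_imp_le)
    then show "\<sigma> y0 \<le> M * K + \<epsilon>" by simp
  qed
qed

end

section \<open>Flows of periodic Lipschitz velocity fields\<close>

locale periodic_flow =
  fixes v X :: "real \<Rightarrow> real \<Rightarrow> real" and L :: real
  assumes L_nonneg: "0 \<le> L"
    and v_lipschitz: "\<And>t a b. t \<in> {0..1} \<Longrightarrow> \<bar>v t a - v t b\<bar> \<le> L * \<bar>a - b\<bar>"
    and v_periodic: "\<And>t. t \<in> {0..1} \<Longrightarrow> periodic2pi (v t)"
    and X_0: "\<And>x. X 0 x = x"
    and X_ode: "\<And>t x. t \<in> {0..1} \<Longrightarrow>
        ((\<lambda>s. X s x) has_real_derivative v t (X t x)) (at t within {0..1})"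
begin

lemma X_periodic_displacement:
  assumes t: "t \<in> {0..1}"
  shows "periodic2pi (\<lambda>x. X t x - x)"
  unfolding periodic2pi_def
proof
  fix x
  have "((\<lambda>s. X s (x + 2*pi) - 2*pi) has_real_derivative v s (X s (x + 2*pi) - 2*pi)) (at s within {0..1})"
    if "s \<in> {0..1}" for s
  proof -
    have "v s (X s (x + 2*pi) - 2*pi) = v s (X s (x + 2*pi))"
      using v_periodic[OF that] unfolding periodic2pi_def by (metis diff_add_cancel)
    then show ?thesis using X_ode[OF that, of "x + 2*pi"] by (auto intro!: derivative_eq_intros)
  qed
  from ode_solutions_dist_bounds(1)[OF v_lipschitz this X_ode[of _ x] t]
  show "X t (x + 2*pi) - (x + 2*pi) = X t x - x" using X_0 by simp
qed

lemma bilipschitz_X: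
  assumes t: "t \<in> {0..1}"
  shows "bilipschitz_circle_map (X t) (exp L)"
proof -
  have "exp (L*t) \<le> exp L" using t L_nonneg by (simp add: mult_left_le)
  then have exp_mono: "exp (L*t) * \<bar>a\<bar> \<le> exp L * \<bar>a\<bar>" for a :: real
    by (rule mult_right_mono) simp
  have "\<bar>X t x - X t y\<bar> \<le> exp L * \<bar>x - y\<bar>" and "\<bar>x - y\<bar> \<le> exp L * \<bar>X t x - X t y\<bar>" for x y
    using ode_solutions_dist_bounds[OF v_lipschitz X_ode[of _ x] X_ode[of _ y] t] X_0
      exp_mono[of "x - y"] exp_mono[of "X t x - X t y"] by auto
  then show ?thesis
    using L_nonneg X_periodic_displacement[OF t] by unfold_locales auto
qed

end

section \<open>Conservation of the weighted norm\<close>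

text \<open>\<open>v\<close> stands for \<open>\<partial>\<^sub>x \<phi>\<close>.\<close>

locale L2_transport = periodic_flow v X L
  for v X :: "real \<Rightarrow> real \<Rightarrow> real" and L :: real +
  fixes \<rho> :: "real \<Rightarrow> real" and \<rho>t g G :: "real \<Rightarrow> real \<Rightarrow> real"
  assumes rho_cont: "continuous_on UNIV \<rho>" and rho_periodic: "periodic2pi \<rho>"
    and rho_pos: "\<And>x. 0 < \<rho> x"
    and v_has_zero: "\<And>t. t \<in> {0..1} \<Longrightarrow> \<exists>y. v t y = 0"
    and rhot_cont: "\<And>t. t \<in> {0..1} \<Longrightarrow> continuous_on UNIV (\<rho>t t)"
    and rhot_periodic: "\<And>t. t \<in> {0..1} \<Longrightarrow> periodic2pi (\<rho>t t)"
    and rhot_nonneg: "\<And>t x. t \<in> {0..1} \<Longrightarrow> 0 \<le> \<rho>t t x"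
    and rhot_push: "\<And>t. t \<in> {0..1} \<Longrightarrow>
        distr (density Tmeas (\<lambda>x. ennreal (\<rho> x))) Tmeas (\<lambda>x. tmod (X t x))
          = density Tmeas (\<lambda>y. ennreal (\<rho>t t y))"
    and g_deriv: "\<And>t x. t \<in> {0..1} \<Longrightarrow> (g t has_real_derivative deriv (g t) x) (at x)"
    and g_periodic: "\<And>t. t \<in> {0..1} \<Longrightarrow> periodic2pi (g t)"
    and g_mean: "\<And>t. t \<in> {0..1} \<Longrightarrow> Tint (g t) = 0"
    and G_cont: "continuous_on ({0..1} \<times> UNIV) (\<lambda>(t, x). G t x)"
    and G_time_deriv: "\<And>t x. t \<in> {0..1} \<Longrightarrow>
        ((\<lambda>s. g s x) has_real_derivative G t x) (at t within {0..1})"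
    and g_eq: "\<And>t x. t \<in> {0..1} \<Longrightarrow>
        ((\<lambda>s. g s x) has_real_derivative
           (- deriv (g t) x * v t x
            + Tint (\<lambda>y. deriv (g t) y * v t y) * (1 / (Tint (\<lambda>y. 1 / \<rho>t t y) * \<rho>t t x))))
         (at t within {0..1})"
begin

lemma g_cont: "t \<in> {0..1} \<Longrightarrow> continuous_on UNIV (g t)"
  using g_deriv by (meson DERIV_isCont continuous_at_imp_continuous_on)

lemma push_forward:
  assumes t: "t \<in> {0..1}" and h_cont: "continuous_on UNIV h" and h_per: "periodic2pi h"
  shows "Tint (\<lambda>x. h (X t x) * \<rho> x) = Tint (\<lambda>y. h y * \<rho>t t y)"
proof -
  interpret bilipschitz_circle_map "X t" "exp L" by (rule bilipschitz_X[OF t])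
  have "tmod \<in> borel_measurable borel"
    unfolding tmod_def by measurable
  then have tmod_X: "(\<lambda>x. tmod (X t x)) \<in> borel_measurable borel"
    by (rule measurable_compose[OF borel_measurable_continuous_onI[OF continuous]])
  have h_meas: "h \<in> borel_measurable Tmeas"
    by (rule borel_measurable_Tmeas_continuous[OF h_cont])
  have tmod_X': "(\<lambda>x. tmod (X t x)) \<in> measurable (density Tmeas (\<lambda>x. ennreal (\<rho> x))) Tmeas"
    using tmod_X measurable_cong_sets[of "density Tmeas (\<lambda>x. ennreal (\<rho> x))" borel Tmeas borel] by simp
  have h_tmod_X: "(\<lambda>x. h (tmod (X t x))) \<in> borel_measurable Tmeas"
    using measurable_compose[OF tmod_X borel_measurable_continuous_onI[OF h_cont]]
      measurable_cong_sets[of Tmeas borel borel borel] by simp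
  have "integral\<^sup>L (distr (density Tmeas (\<lambda>x. ennreal (\<rho> x))) Tmeas (\<lambda>x. tmod (X t x))) h
      = integral\<^sup>L (density Tmeas (\<lambda>x. ennreal (\<rho> x))) (\<lambda>x. h (tmod (X t x)))"
    by (rule integral_distr[OF tmod_X' h_meas])
  also have "\<dots> = integral\<^sup>L Tmeas (\<lambda>x. \<rho> x *\<^sub>R h (tmod (X t x)))"
    by (rule integral_density[OF h_tmod_X borel_measurable_Tmeas_continuous[OF rho_cont]])
       (use rho_pos in \<open>simp add: less_imp_le\<close>)
  also have "\<dots> = Tint (\<lambda>x. h (X t x) * \<rho> x)"
    unfolding Tint_def using periodic2pi_tmod[OF h_per] by (simp add: mult.commute)
  finally have "Tint (\<lambda>x. h (X t x) * \<rho> x) = integral\<^sup>L (density Tmeas (\<lambda>y. ennreal (\<rho>t t y))) h"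
    using rhot_push[OF t] by simp
  also have "\<dots> = integral\<^sup>L Tmeas (\<lambda>y. \<rho>t t y *\<^sub>R h y)"
    by (rule integral_density[OF h_meas borel_measurable_Tmeas_continuous[OF rhot_cont[OF t]]])
       (use rhot_nonneg[OF t] in simp)
  also have "\<dots> = Tint (\<lambda>y. h y * \<rho>t t y)"
    unfolding Tint_def by (simp add: mult.commute)
  finally show ?thesis .
qed

lemma rhot_bounds:
  obtains m M where "0 < m" and "\<And>t y. t \<in> {0..1} \<Longrightarrow> m \<le> \<rho>t t y"
    and "\<And>t y. t \<in> {0..1} \<Longrightarrow> \<rho>t t y \<le> M"
proof -
  obtain x1 where min: "\<And>x. \<rho> x1 \<le> \<rho> x"
    using periodic2pi_attains_min[OF rho_cont rho_periodic] by metis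
  obtain x2 where max: "\<And>x. \<rho> x \<le> \<rho> x2"
    using periodic2pi_attains_max[OF rho_cont rho_periodic] by metis
  have "0 \<le> \<rho> x1" by (rule less_imp_le[OF rho_pos])
  have "\<rho> x1 / exp L \<le> \<rho>t t y \<and> \<rho>t t y \<le> \<rho> x2 * exp L" if t: "t \<in> {0..1}" for t y
  proof -
    interpret bilipschitz_circle_map "X t" "exp L" by (rule bilipschitz_X[OF t])
    show ?thesis
      using pushforward_density_bounds[OF rho_cont rho_periodic \<open>0 \<le> \<rho> x1\<close> min max rhot_cont[OF t]
          rhot_periodic[OF t] push_forward[OF t]] by blast
  qed
  moreover have "0 < \<rho> x1 / exp L" by (simp add: rho_pos)
  ultimately show thesis by (intro that[of "\<rho> x1 / exp L" "\<rho> x2 * exp L"]) auto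
qed

lemma rhot_pos:
  assumes "t \<in> {0..1}"
  shows "0 < \<rho>t t y"
proof -
  obtain m M where "0 < m" "\<And>t y. t \<in> {0..1} \<Longrightarrow> m \<le> \<rho>t t y"
    "\<And>t y. t \<in> {0..1} \<Longrightarrow> \<rho>t t y \<le> M"
    using rhot_bounds by metis
  with assms show ?thesis by (meson less_le_trans)
qed

definition drift :: "real \<Rightarrow> real" where
  "drift t = Tint (\<lambda>y. deriv (g t) y * v t y) / Tint (\<lambda>y. 1 / \<rho>t t y)"

lemma G_eq: "t \<in> {0..1} \<Longrightarrow> G t x = drift t / \<rho>t t x - deriv (g t) x * v t x"
  using has_real_derivative_within_01_unique[OF _ G_time_deriv g_eq] by (simp add: drift_def)

lemma G_periodic:
  assumes t: "t \<in> {0..1}"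
  shows "periodic2pi (G t)"
  unfolding periodic2pi_def
proof
  fix x
  have "((\<lambda>s. g s x) has_real_derivative G t (x + 2*pi)) (at t within {0..1})"
    by (rule has_field_derivative_transform_within[OF G_time_deriv[OF t, of "x + 2*pi"], of 1])
       (use t g_periodic in \<open>auto simp: periodic2pi_def\<close>)
  then show "G t (x + 2*pi) = G t x"
    using has_real_derivative_within_01_unique[OF t _ G_time_deriv[OF t]] by blast
qed

text \<open>At a zero of \<open>v t\<close> the transport term vanishes and \<open>G\<close> sees the correction term alone;
  the two-sided bounds on \<open>\<rho>t\<close> propagate this to every point.\<close>

lemma drift_div_rhot_bounded:
  obtains C where "\<And>t y. t \<in> {0..1} \<Longrightarrow> \<bar>drift t / \<rho>t t y\<bar> \<le> C"
proof -
  obtain m M where "0 < m" and m: "\<And>t y. t \<in> {0..1} \<Longrightarrow> m \<le> \<rho>t t y"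
    and M: "\<And>t y. t \<in> {0..1} \<Longrightarrow> \<rho>t t y \<le> M"
    using rhot_bounds by metis
  obtain B where B: "\<And>t x. t \<in> {0..1} \<Longrightarrow> \<bar>G t x\<bar> \<le> B"
    using periodic2pi_family_bounded[OF _ G_cont G_periodic] by auto
  have "\<bar>drift t / \<rho>t t y\<bar> \<le> B * M / m" if t: "t \<in> {0..1}" for t y
  proof -
    obtain y1 where "v t y1 = 0" using v_has_zero[OF t] by blast
    then have "drift t = G t y1 * \<rho>t t y1"
      using G_eq[OF t, of y1] rhot_pos[OF t, of y1] by simp
    have "0 \<le> B" using B[OF t, of y1] by (meson abs_ge_zero order_trans)
    have "\<bar>drift t\<bar> = \<bar>G t y1\<bar> * \<rho>t t y1"
      using \<open>drift t = G t y1 * \<rho>t t y1\<close> rhot_pos[OF t, of y1] by (simp add: abs_mult)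
    also have "\<dots> \<le> B * M"
      using B[OF t, of y1] M[OF t, of y1] rhot_pos[OF t, of y1] \<open>0 \<le> B\<close> by (intro mult_mono) auto
    finally have "\<bar>drift t\<bar> \<le> B * M" .
    moreover have "0 \<le> M" using M[OF t, of y1] rhot_pos[OF t, of y1] by linarith
    ultimately have "\<bar>drift t\<bar> / \<rho>t t y \<le> B * M / m"
      using m[OF t, of y] \<open>0 < m\<close> \<open>0 \<le> B\<close> by (intro frac_le) auto
    then show ?thesis using rhot_pos[OF t, of y] by (simp add: abs_divide)
  qed
  then show thesis by (rule that)
qed

lemma g_bounded:
  obtains C where "\<And>t x. t \<in> {0..1} \<Longrightarrow> \<bar>g t x\<bar> \<le> C"
proof -
  obtain C0 where C0: "\<And>x. \<bar>g 0 x\<bar> \<le> C0"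
    using periodic2pi_bounded[OF g_cont[of 0] g_periodic[of 0]] by auto
  obtain B where B: "\<And>t x. t \<in> {0..1} \<Longrightarrow> \<bar>G t x\<bar> \<le> B"
    using periodic2pi_family_bounded[OF _ G_cont G_periodic] by auto
  have "\<bar>g t x\<bar> \<le> C0 + B" if t: "t \<in> {0..1}" for t x
  proof -
    have "\<bar>g t x - g 0 x\<bar> \<le> B * \<bar>t - 0\<bar>"
      using field_differentiable_bound[of "{0..1}" "\<lambda>s. g s x" "\<lambda>s. G s x" B t 0]
        G_time_deriv B t by auto
    moreover have "B * t \<le> B" using t B[OF t, of x] by (simp add: mult_left_le)
    ultimately show ?thesis using C0[of x] t by auto
  qed
  then show thesis by (rule that)
qed

text \<open>Along the flow the transport term of the equation cancels against the motion of the point.\<close>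

lemma g_along_flow_deriv:
  assumes t: "t \<in> {0..1}"
  shows "((\<lambda>s. g s (X s x)) has_real_derivative drift t / \<rho>t t (X t x)) (at t within {0..1})"
proof -
  have "G t (X t x) + deriv (g t) (X t x) * v t (X t x) = drift t / \<rho>t t (X t x)"
    using G_eq[OF t] by simp
  with has_real_derivative_joint_chain[OF G_cont G_time_deriv g_deriv[OF t] X_ode[OF t, of x] t]
  show ?thesis by simp
qed

lemma Tint_g_div_rhot_along_flow:
  assumes t: "t \<in> {0..1}"
  shows "Tint (\<lambda>x. g t (X t x) / \<rho>t t (X t x) * \<rho> x) = 0"
proof -
  have "continuous_on UNIV (\<lambda>y. g t y / \<rho>t t y)"
    using rhot_pos[OF t] by (intro continuous_intros g_cont[OF t] rhot_cont[OF t]) (metis less_irrefl)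
  moreover have "periodic2pi (\<lambda>y. g t y / \<rho>t t y)"
    using g_periodic[OF t] rhot_periodic[OF t] by (simp add: periodic2pi_def)
  ultimately have "Tint (\<lambda>x. g t (X t x) / \<rho>t t (X t x) * \<rho> x) = Tint (\<lambda>y. g t y / \<rho>t t y * \<rho>t t y)"
    by (rule push_forward[OF t])
  also have "\<dots> = Tint (g t)"
    using rhot_pos[OF t] by (simp add: less_imp_neq[symmetric])
  finally show ?thesis using g_mean[OF t] by simp
qed

lemma has_real_derivative_energy_along_flow:
  assumes s: "s \<in> {0..1}"
  shows "((\<lambda>s. Tint (\<lambda>x. (g s (X s x))^2 * \<rho> x)) has_real_derivative
      2 * drift s * Tint (\<lambda>x. g s (X s x) / \<rho>t s (X s x) * \<rho> x)) (at s within {0..1})"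
proof -
  define E where "E u x = (g u (X u x))^2 * \<rho> x" for u x
  define E' where "E' u x = 2 * g u (X u x) * (drift u / \<rho>t u (X u x)) * \<rho> x" for u x
  obtain Cg where Cg: "\<And>u x. u \<in> {0..1} \<Longrightarrow> \<bar>g u x\<bar> \<le> Cg"
    using g_bounded by metis
  obtain Cd where Cd: "\<And>u y. u \<in> {0..1} \<Longrightarrow> \<bar>drift u / \<rho>t u y\<bar> \<le> Cd"
    using drift_div_rhot_bounded by metis
  obtain M where M: "\<And>x. \<bar>\<rho> x\<bar> \<le> M" using periodic2pi_bounded[OF rho_cont rho_periodic] by auto
  have nonneg: "0 \<le> Cg" "0 \<le> Cd" "0 \<le> M"
    using order_trans[OF abs_ge_zero Cg[of 0 0]] order_trans[OF abs_ge_zero Cd[of 0 0]]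
      order_trans[OF abs_ge_zero M[of 0]] by simp_all
  have "((\<lambda>u. E u x) has_real_derivative E' u x) (at u within {0..1})" if "u \<in> {0..1}" for u x
    unfolding E_def E'_def using g_along_flow_deriv[OF that, of x]
    by (auto intro!: derivative_eq_intros simp: algebra_simps)
  moreover have "continuous_on UNIV (E u)" if "u \<in> {0..1}" for u
    unfolding E_def
    by (intro continuous_intros rho_cont continuous_on_compose2[OF g_cont[OF that]
        bilipschitz_circle_map.continuous[OF bilipschitz_X[OF that]]]) auto
  moreover have "\<bar>E u x\<bar> \<le> Cg^2 * M" if "u \<in> {0..1}" for u x
  proof -
    have "\<bar>E u x\<bar> = \<bar>g u (X u x)\<bar>^2 * \<bar>\<rho> x\<bar>" by (simp add: E_def abs_mult power_abs)
    also have "\<dots> \<le> Cg^2 * M"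
      using Cg[OF that] M nonneg by (intro mult_mono power_mono) auto
    finally show ?thesis .
  qed
  moreover have "\<bar>E' u x\<bar> \<le> 2 * Cg * Cd * M" if "u \<in> {0..1}" for u x
  proof -
    have "\<bar>E' u x\<bar> = 2 * \<bar>g u (X u x)\<bar> * \<bar>drift u / \<rho>t u (X u x)\<bar> * \<bar>\<rho> x\<bar>"
      by (simp add: E'_def abs_mult)
    also have "\<dots> \<le> 2 * Cg * Cd * M"
      using Cg[OF that] Cd[OF that] M nonneg by (intro mult_mono) auto
    finally show ?thesis .
  qed
  ultimately have "((\<lambda>u. Tint (E u)) has_real_derivative Tint (E' s)) (at s within {0..1})"
    by (rule has_real_derivative_Tint[OF s])
  moreover have "E' s = (\<lambda>x. 2 * drift s * (g s (X s x) / \<rho>t s (X s x) * \<rho> x))"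
    by (auto simp: E'_def)
  then have "Tint (E' s) = 2 * drift s * Tint (\<lambda>x. g s (X s x) / \<rho>t s (X s x) * \<rho> x)"
    unfolding Tint_def by (simp only: integral_mult_right_zero)
  ultimately show ?thesis by (simp add: E_def[abs_def])
qed

lemma energy_along_flow_const:
  assumes t: "t \<in> {0..1}"
  shows "Tint (\<lambda>x. (g t (X t x))^2 * \<rho> x) = Tint (\<lambda>x. (g 0 x)^2 * \<rho> x)"
proof -
  have "((\<lambda>s. Tint (\<lambda>x. (g s (X s x))^2 * \<rho> x)) has_real_derivative 0) (at s within {0..1})"
    if "s \<in> {0..1}" for s
    using has_real_derivative_energy_along_flow[OF that] Tint_g_div_rhot_along_flow[OF that] by simp
  then obtain c where c: "\<And>s. s \<in> {0..1} \<Longrightarrow> Tint (\<lambda>x. (g s (X s x))^2 * \<rho> x) = c"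
    using has_field_derivative_zero_constant[of "{0..1}" "\<lambda>s. Tint (\<lambda>x. (g s (X s x))^2 * \<rho> x)"]
    by auto
  show ?thesis using c[OF t] c[of 0] X_0 by simp
qed

lemma L2_conserved:
  assumes t: "t \<in> {0..1}"
  shows "Tint (\<lambda>x. \<bar>g t x\<bar>^2 * \<rho>t t x) = Tint (\<lambda>x. \<bar>g 0 x\<bar>^2 * \<rho> x)"
proof -
  have "continuous_on UNIV (\<lambda>y. \<bar>g t y\<bar>^2)" by (intro continuous_intros g_cont[OF t])
  moreover have "periodic2pi (\<lambda>y. \<bar>g t y\<bar>^2)" using g_periodic[OF t] by (simp add: periodic2pi_def)
  ultimately have "Tint (\<lambda>x. \<bar>g t (X t x)\<bar>^2 * \<rho> x) = Tint (\<lambda>x. \<bar>g t x\<bar>^2 * \<rho>t t x)"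
    by (rule push_forward[OF t])
  then have "Tint (\<lambda>x. \<bar>g t x\<bar>^2 * \<rho>t t x) = Tint (\<lambda>x. (g t (X t x))^2 * \<rho> x)"
    by simp
  also have "\<dots> = Tint (\<lambda>x. (g 0 x)^2 * \<rho> x)" by (rule energy_along_flow_const[OF t])
  finally show ?thesis by simp
qed

end

lemma smooth2_second_partial_snd:
  fixes \<phi> :: "real \<Rightarrow> real \<Rightarrow> real"
  assumes "smooth2 (A \<times> UNIV) (\<lambda>(t, x). \<phi> t x)"
  obtains v w where "\<And>t x. t \<in> A \<Longrightarrow> (\<phi> t has_real_derivative v t x) (at x)"
    and "\<And>t x. t \<in> A \<Longrightarrow> (v t has_real_derivative w t x) (at x)"
    and "continuous_on (A \<times> UNIV) (\<lambda>(t, x). w t x)"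
proof -
  have "Ck2 2 (A \<times> UNIV) (\<lambda>(t, x). \<phi> t x)" using assms unfolding smooth2_def by blast
  then obtain D1 D2 where
    D: "\<forall>p\<in>A \<times> UNIV. ((\<lambda>(t, x). \<phi> t x) has_derivative (\<lambda>h. D1 p * fst h + D2 p * snd h)) (at p within A \<times> UNIV)"
    and "Ck2 1 (A \<times> UNIV) D2"
    by (auto simp: numeral_2_eq_2)
  then obtain E1 E2 where
    E: "\<forall>p\<in>A \<times> UNIV. (D2 has_derivative (\<lambda>h. E1 p * fst h + E2 p * snd h)) (at p within A \<times> UNIV)"
    and "continuous_on (A \<times> UNIV) E2"
    by auto
  show thesis
  proof (rule that[of "\<lambda>t x. D2 (t, x)" "\<lambda>t x. E2 (t, x)"])
    show "(\<phi> t has_real_derivative D2 (t, x)) (at x)" if "t \<in> A" for t x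
      using has_real_derivative_partial_snd[OF D that] by simp
    show "((\<lambda>x. D2 (t, x)) has_real_derivative E2 (t, x)) (at x)" if "t \<in> A" for t x
      by (rule has_real_derivative_partial_snd[OF E that])
    show "continuous_on (A \<times> UNIV) (\<lambda>(t, x). E2 (t, x))"
      using \<open>continuous_on (A \<times> UNIV) E2\<close> by simp
  qed
qed

lemma smooth2_periodic_gradient_field:
  fixes \<phi> :: "real \<Rightarrow> real \<Rightarrow> real"
  assumes smooth: "smooth2 ({0..1} \<times> UNIV) (\<lambda>(t, x). \<phi> t x)"
    and per: "\<And>t. t \<in> {0..1} \<Longrightarrow> periodic2pi (\<phi> t)"
  obtains L where "0 \<le> L"
    and "\<And>t a b. t \<in> {0..1} \<Longrightarrow> \<bar>deriv (\<phi> t) a - deriv (\<phi> t) b\<bar> \<le> L * \<bar>a - b\<bar>"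
    and "\<And>t. t \<in> {0..1} \<Longrightarrow> periodic2pi (deriv (\<phi> t))"
    and "\<And>t. t \<in> {0..1} \<Longrightarrow> \<exists>y. deriv (\<phi> t) y = 0"
proof -
  obtain v w where v: "\<And>t x. t \<in> {0..1} \<Longrightarrow> (\<phi> t has_real_derivative v t x) (at x)"
    and w: "\<And>t x. t \<in> {0..1} \<Longrightarrow> (v t has_real_derivative w t x) (at x)"
    and w_cont: "continuous_on ({0..1} \<times> UNIV) (\<lambda>(t, x). w t x)"
    using smooth2_second_partial_snd[OF smooth] by blast
  have deriv_eq: "deriv (\<phi> t) = v t" if "t \<in> {0..1}" for t
    using v[OF that] by (simp add: DERIV_imp_deriv fun_eq_iff)
  have v_per: "periodic2pi (v t)" if "t \<in> {0..1}" for t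
    by (rule periodic2pi_deriv[OF per[OF that] v[OF that]])
  have "periodic2pi (w t)" if "t \<in> {0..1}" for t
    by (rule periodic2pi_deriv[OF v_per[OF that] w[OF that]])
  then obtain B where B: "\<And>t x. t \<in> {0..1} \<Longrightarrow> \<bar>w t x\<bar> \<le> B"
    using periodic2pi_family_bounded[OF _ w_cont] by auto
  show thesis
  proof (rule that[of "max 0 B"])
    fix t :: real assume t: "t \<in> {0..1}"
    have "norm (v t a - v t b) \<le> max 0 B * norm (a - b)" for a b
      by (rule field_differentiable_bound[of UNIV "v t" "w t"])
         (use w[OF t] B[OF t] in \<open>auto simp: le_max_iff_disj\<close>)
    then show "\<bar>deriv (\<phi> t) a - deriv (\<phi> t) b\<bar> \<le> max 0 B * \<bar>a - b\<bar>" for a b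
      using deriv_eq[OF t] by simp
    show "periodic2pi (deriv (\<phi> t))" using v_per[OF t] deriv_eq[OF t] by simp
    have "continuous_on UNIV (\<phi> t)"
      using v[OF t] by (meson DERIV_isCont continuous_at_imp_continuous_on)
    then obtain y where "\<And>x. \<phi> t x \<le> \<phi> t y"
      using periodic2pi_attains_max[OF _ per[OF t]] by metis
    then have "v t y = 0" by (intro DERIV_local_max[OF v[OF t], of 1]) auto
    then show "\<exists>y. deriv (\<phi> t) y = 0" using deriv_eq[OF t] by auto
  qed simp
qed

theorem proposition3p5:
  fixes \<rho> :: "real \<Rightarrow> real"
    and \<phi> :: "real \<Rightarrow> real \<Rightarrow> real"
    and X :: "real \<Rightarrow> real \<Rightarrow> real"
    and \<rho>t :: "real \<Rightarrow> real \<Rightarrow> real"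
    and g :: "real \<Rightarrow> real \<Rightarrow> real"
  assumes rho_smooth: "smooth1 \<rho>" and rho_per: "periodic2pi \<rho>"
    and rho_pos: "\<And>x. \<rho> x > 0" and rho_prob: "Tint \<rho> = 1"
    and phi_smooth: "smooth2 ({0..1} \<times> UNIV) (\<lambda>(t, x). \<phi> t x)"
    and phi_per: "\<And>t. t \<in> {0..1} \<Longrightarrow> periodic2pi (\<phi> t)"
    and X0: "\<And>x. X 0 x = x"
    and X_flow: "\<And>t x. t \<in> {0..1} \<Longrightarrow>
        ((\<lambda>s. X s x) has_real_derivative deriv (\<phi> t) (X t x)) (at t within {0..1})"
    and rhot_cont: "\<And>t. t \<in> {0..1} \<Longrightarrow> continuous_on UNIV (\<rho>t t)"
    and rhot_per: "\<And>t. t \<in> {0..1} \<Longrightarrow> periodic2pi (\<rho>t t)"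
    and rhot_nonneg: "\<And>t x. t \<in> {0..1} \<Longrightarrow> \<rho>t t x \<ge> 0"
    and rhot_push: "\<And>t. t \<in> {0..1} \<Longrightarrow>
        distr (density Tmeas (\<lambda>x. ennreal (\<rho> x))) Tmeas (\<lambda>x. tmod (X t x))
          = density Tmeas (\<lambda>y. ennreal (\<rho>t t y))"
    and g_C2: "\<And>t. t \<in> {0..1} \<Longrightarrow> Cn 2 (g t)"
    and g_per: "\<And>t. t \<in> {0..1} \<Longrightarrow> periodic2pi (g t)"
    and g_C1t: "\<exists>G. continuous_on ({0..1} \<times> UNIV) (\<lambda>(t, x). G t x) \<and>
        (\<forall>t\<in>{0..1}. \<forall>x. ((\<lambda>s. g s x) has_real_derivative G t x) (at t within {0..1}))"
    and g_mean: "\<And>t. t \<in> {0..1} \<Longrightarrow> Tint (g t) = 0"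
    and g_eq: "\<And>t x. t \<in> {0..1} \<Longrightarrow>
        ((\<lambda>s. g s x) has_real_derivative
           (- deriv (g t) x * deriv (\<phi> t) x
            + Tint (\<lambda>y. deriv (g t) y * deriv (\<phi> t) y)
              * (1 / (Tint (\<lambda>y. 1 / \<rho>t t y) * \<rho>t t x))))
         (at t within {0..1})"
  shows "\<forall>t\<in>{0..1}. Tint (\<lambda>x. \<bar>g t x\<bar>^2 * \<rho>t t x) = Tint (\<lambda>x. \<bar>g 0 x\<bar>^2 * \<rho> x)"
proof -
  obtain L where "0 \<le> L"
    and "\<And>t a b. t \<in> {0..1} \<Longrightarrow> \<bar>deriv (\<phi> t) a - deriv (\<phi> t) b\<bar> \<le> L * \<bar>a - b\<bar>"
    and "\<And>t. t \<in> {0..1} \<Longrightarrow> periodic2pi (deriv (\<phi> t))"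
    and "\<And>t. t \<in> {0..1} \<Longrightarrow> \<exists>y. deriv (\<phi> t) y = 0"
    using smooth2_periodic_gradient_field[OF phi_smooth phi_per] by metis
  moreover obtain G where "continuous_on ({0..1} \<times> UNIV) (\<lambda>(t, x). G t x)"
    and "\<And>t x. t \<in> {0..1} \<Longrightarrow> ((\<lambda>s. g s x) has_real_derivative G t x) (at t within {0..1})"
    using g_C1t by blast
  moreover have "continuous_on UNIV \<rho>"
    using rho_smooth unfolding smooth1_def Cn_def by (metis funpow_0)
  moreover have "(g t has_real_derivative deriv (g t) x) (at x)" if "t \<in> {0..1}" for t x
    using g_C2[OF that] unfolding Cn_def DERIV_deriv_iff_real_differentiable
    by (metis funpow_0 zero_less_numeral)
  ultimately interpret L2_transport "\<lambda>t. deriv (\<phi> t)" X L \<rho> \<rho>t g G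
    by unfold_locales (use assms in auto)
  show ?thesis using L2_conserved by blast
qed

end
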